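(* Let $\eta\in\mathbb{R}$ and let $U=\mathrm{diag}(1,e^{i\frac{2\pi}{3}\eta})$ be a qubit $Z$-phase gate. Let $\alpha,\beta\in\mathbb{R}$ satisfy $2\alpha-\beta=3k$ for some $k\in\mathbb{Z}$ and $\alpha+\beta=\eta$. Consider the two-qutrit diagonal unitary $W$ which, when the first (control) qutrit is in $\ket{0}$, $\ket{1}$, $\ket{2}$, applies respectively $Z(0,0)$, $Z(2\alpha-\beta,\alpha+\beta)$, $Z(\alpha+\beta,2\beta-\alpha)$ to the second (target) qutrit. Then $W$ emulates the $\ket{2}$-controlled $U$ gate: for every $c\in\{0,1,2\}$ and $t\in\{0,1\}$, $W\ket{c,t}=\ket{c,t}$ if $c\in\{0,1\}$ and $W\ket{2,t}=\ket{2}\otimes U\ket{t}$ (identifying qubit basis states with qutrit basis states of the same label).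
   Context: A qutrit is $\mathbb{C}^3$ with basis $\ket{0},\ket{1},\ket{2}$; $\omega=e^{2\pi i/3}$; for $a,b\in\mathbb{R}$, $Z(a,b)=\mathrm{diag}(1,\omega^a,\omega^b)$. In the paper $W$ is the two-qutrit circuit built from CX gates and $Z(\alpha,\beta)$-type phase gates (a controlled-phase construction from phase gadgets), whose action is as described. *)

theory Defs
  imports Complex_Main
begin

text \<open>States: a qutrit (or qubit) state is a function nat => complex (amplitudes on basis
  labels 0,1,2, resp. 0,1); a two-qutrit state is nat => nat => complex
  (first argument: control label, second: target label).\<close>

definition omega_pow :: "real \<Rightarrow> complex" where
  "omega_pow a = cis (2 * pi * a / 3)"

definition ket :: "nat \<Rightarrow> nat \<Rightarrow> complex" where
  "ket j = (\<lambda>i. if i = j then 1 else 0)"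

definition tensor :: "(nat \<Rightarrow> complex) \<Rightarrow> (nat \<Rightarrow> complex) \<Rightarrow> (nat \<Rightarrow> nat \<Rightarrow> complex)" where
  "tensor \<phi> \<chi> = (\<lambda>c t. \<phi> c * \<chi> t)"

definition Zgate :: "real \<Rightarrow> real \<Rightarrow> (nat \<Rightarrow> complex) \<Rightarrow> (nat \<Rightarrow> complex)" where
  "Zgate a b \<psi> = (\<lambda>j. (if j = 0 then 1 else if j = 1 then omega_pow a else omega_pow b) * \<psi> j)"

definition Ugate :: "real \<Rightarrow> (nat \<Rightarrow> complex) \<Rightarrow> (nat \<Rightarrow> complex)" where
  "Ugate \<eta> \<psi> = (\<lambda>j. (if j = 0 then 1 else cis (2 * pi * \<eta> / 3)) * \<psi> j)"

definition Wgate :: "real \<Rightarrow> real \<Rightarrow> (nat \<Rightarrow> nat \<Rightarrow> complex) \<Rightarrow> (nat \<Rightarrow> nat \<Rightarrow> complex)" where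
  "Wgate \<alpha> \<beta> \<Psi> = (\<lambda>c. (if c = 0 then Zgate 0 0
                           else if c = 1 then Zgate (2 * \<alpha> - \<beta>) (\<alpha> + \<beta>)
                           else Zgate (\<alpha> + \<beta>) (2 * \<beta> - \<alpha>)) (\<Psi> c))"

end

theory Submission
  imports Defs
begin

text \<open>On the qubit subspace spanned by \<open>|0\<rangle>, |1\<rangle>\<close> the qutrit gate \<open>Z(a,b)\<close> acts as
  \<open>diag(1, \<omega>\<^sup>a)\<close>, i.e. as the qubit phase gate \<open>U\<close> with \<open>\<eta> = a\<close>. When the control is \<open>|1\<rangle>\<close>,
  \<open>W\<close> applies \<open>Z(2\<alpha>-\<beta>, \<alpha>+\<beta>)\<close>, which on the qubit subspace is \<open>diag(1, \<omega>\<^bsup>3k\<^esup>) = 1\<close>;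
  when the control is \<open>|2\<rangle>\<close>, it applies \<open>Z(\<alpha>+\<beta>, 2\<beta>-\<alpha>)\<close>, which there is \<open>diag(1, \<omega>\<^sup>\<eta>) = U\<close>.\<close>

definition controlled :: "(nat \<Rightarrow> (nat \<Rightarrow> complex) \<Rightarrow> (nat \<Rightarrow> complex))
    \<Rightarrow> (nat \<Rightarrow> nat \<Rightarrow> complex) \<Rightarrow> (nat \<Rightarrow> nat \<Rightarrow> complex)" where
  "controlled G \<Psi> = (\<lambda>c. G c (\<Psi> c))"

lemma controlled_tensor_ket:
  assumes "\<And>c. G c (\<lambda>_. 0) = (\<lambda>_. 0)"
  shows "controlled G (tensor (ket c) \<chi>) = tensor (ket c) (G c \<chi>)"
  using assms by (auto simp: controlled_def tensor_def ket_def fun_eq_iff)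

definition W_block :: "real \<Rightarrow> real \<Rightarrow> nat \<Rightarrow> (nat \<Rightarrow> complex) \<Rightarrow> (nat \<Rightarrow> complex)" where
  "W_block \<alpha> \<beta> c = (if c = 0 then Zgate 0 0
                     else if c = 1 then Zgate (2 * \<alpha> - \<beta>) (\<alpha> + \<beta>)
                     else Zgate (\<alpha> + \<beta>) (2 * \<beta> - \<alpha>))"

lemma Wgate_eq_controlled: "Wgate \<alpha> \<beta> = controlled (W_block \<alpha> \<beta>)"
  by (simp add: fun_eq_iff Wgate_def controlled_def W_block_def)

lemma Zgate_zero: "Zgate a b (\<lambda>_. 0) = (\<lambda>_. 0)"
  by (simp add: Zgate_def)

lemma Wgate_tensor_ket:
  "Wgate \<alpha> \<beta> (tensor (ket c) \<chi>) = tensor (ket c) (W_block \<alpha> \<beta> c \<chi>)"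
  unfolding Wgate_eq_controlled
  by (rule controlled_tensor_ket) (simp add: W_block_def Zgate_zero)

lemma omega_pow_0: "omega_pow 0 = 1"
  by (simp add: omega_pow_def)

lemma Zgate_0_0: "Zgate 0 0 \<psi> = \<psi>"
  by (simp add: Zgate_def omega_pow_0 fun_eq_iff)

lemma Zgate_ket_qubit:
  assumes "t < 2"
  shows "Zgate a b (ket t) = Ugate a (ket t)"
  using assms by (auto simp: Zgate_def Ugate_def omega_pow_def ket_def fun_eq_iff)

lemma Ugate_3_mult_of_int: "Ugate (3 * of_int k) \<psi> = \<psi>"
proof -
  have "cis (2 * pi * (3 * of_int k) / 3) = 1"
    using cis_multiple_2pi[of "of_int k"] by (simp add: mult.assoc)
  then show ?thesis
    by (simp add: Ugate_def fun_eq_iff)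
qed

theorem mainTheorem4:
  fixes \<eta> \<alpha> \<beta> :: real and k :: int
  assumes "2 * \<alpha> - \<beta> = 3 * of_int k"
    and "\<alpha> + \<beta> = \<eta>"
  shows "\<forall>c < 3. \<forall>t < 2.
           (c \<in> {0, 1} \<longrightarrow> Wgate \<alpha> \<beta> (tensor (ket c) (ket t)) = tensor (ket c) (ket t)) \<and>
           (c = 2 \<longrightarrow> Wgate \<alpha> \<beta> (tensor (ket 2) (ket t)) = tensor (ket 2) (Ugate \<eta> (ket t)))"
proof (intro allI impI conjI)
  fix c t :: nat
  assume "t < 2"
  then have block_1: "W_block \<alpha> \<beta> 1 (ket t) = ket t"
    and block_2: "W_block \<alpha> \<beta> 2 (ket t) = Ugate \<eta> (ket t)"
    using assms by (simp_all add: W_block_def Zgate_ket_qubit Ugate_3_mult_of_int)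
  have block_0: "W_block \<alpha> \<beta> 0 (ket t) = ket t"
    by (simp add: W_block_def Zgate_0_0)
  show "c \<in> {0, 1} \<Longrightarrow> Wgate \<alpha> \<beta> (tensor (ket c) (ket t)) = tensor (ket c) (ket t)"
    using block_0 block_1 by (auto simp: Wgate_tensor_ket)
  show "Wgate \<alpha> \<beta> (tensor (ket 2) (ket t)) = tensor (ket 2) (Ugate \<eta> (ket t))"
    using block_2 by (simp add: Wgate_tensor_ket)
qed

end
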